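(* Let $p\ge 2$ be an integer and $\eta>0$. Then the function $\tau_\ell^-$ is strictly decreasing on $[0,1]$.
   Context: For an integer $p\ge 2$ and a real parameter $\eta>-1$, define for $\tau\ge 0$ and $s\in[-1,1]$ $$\ell_-(\tau,s)=\cos\tau\,\sin\!\Big(\tau\eta s-\tfrac{\pi}{p}\Big)+s\sin\tau\,\cos\!\Big(\tau\eta s-\tfrac{\pi}{p}\Big),$$ and let $\tau_\ell^-(s)$ be the smallest positive root in $\tau$ of $\ell_-(\tau,s)=0$. *)

theory Defs
  imports Complex_Main
begin

definition ell_minus :: "nat \<Rightarrow> real \<Rightarrow> real \<Rightarrow> real \<Rightarrow> real" where
  "ell_minus p \<eta> \<tau> s =
     cos \<tau> * sin (\<tau> * \<eta> * s - pi / real p) + s * sin \<tau> * cos (\<tau> * \<eta> * s - pi / real p)"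

definition tau_ell_minus :: "nat \<Rightarrow> real \<Rightarrow> real \<Rightarrow> real" where
  "tau_ell_minus p \<eta> s = (LEAST \<tau>. \<tau> > 0 \<and> ell_minus p \<eta> \<tau> s = 0)"

end

theory Submission
  imports Defs "HOL-Analysis.Analysis"
begin

text \<open>Write \<open>\<theta>(\<tau>, s) = \<tau> \<eta> s - \<pi>/p\<close> for the phase, so that
  \<open>\<ell>\<^sub>-(\<tau>, s) = cos \<tau> sin \<theta> + s sin \<tau> cos \<theta>\<close>. Since \<open>\<ell>\<^sub>-(0, s) = -sin(\<pi>/p) < 0\<close>, any
  point \<open>\<tau> > 0\<close> with \<open>\<ell>\<^sub>-(\<tau>, s) > 0\<close> has a root of \<open>\<ell>\<^sub>-(\<cdot>, s)\<close> before it. Given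
  \<open>s\<^sub>1 < s\<^sub>2\<close> and \<open>r = \<tau>\<^sub>\<ell>\<^sup>-(s\<^sub>1) \<le> \<pi>/2\<close>, such a point for \<open>s\<^sub>2\<close> exists in \<open>(0, r]\<close>:
  either the phase \<open>\<theta>(\<cdot>, s\<^sub>2)\<close> vanishes before \<open>r\<close>, and there \<open>\<ell>\<^sub>- = s\<^sub>2 sin \<tau> > 0\<close>; or
  \<open>\<theta>(r, s\<^sub>1) < \<theta>(r, s\<^sub>2) \<le> 0\<close>, and on \<open>[-\<pi>/2, 0]\<close> both summands of \<open>\<ell>\<^sub>-(r, \<cdot>)\<close> increase
  with \<open>s\<close>, strictly in the second one. The case \<open>s\<^sub>1 = 0\<close>, \<open>r = \<pi>/2\<close> of the same
  argument shows that a root in \<open>(0, \<pi>/2]\<close> exists at all.\<close>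

lemma Least_positive_root:
  fixes f :: "real \<Rightarrow> real"
  assumes cont: "continuous_on {0..y} f" and "f 0 \<noteq> 0" "0 < y" "f y = 0"
  defines "r \<equiv> LEAST t. 0 < t \<and> f t = 0"
  shows "0 < r" "f r = 0" "\<And>t. 0 < t \<Longrightarrow> f t = 0 \<Longrightarrow> r \<le> t"
proof -
  define S where "S = {t \<in> {0..y}. f t = 0}"
  have "closed S"
    unfolding S_def using cont by (rule continuous_closed_preimage_constant) simp
  moreover have "S \<noteq> {}" "bdd_below S"
    using assms unfolding S_def by (auto intro: bdd_belowI[of _ 0])
  ultimately have Inf_S: "Inf S \<in> S"
    by (rule closed_contains_Inf[rotated -1])
  have Inf_pos: "0 < Inf S" and Inf_root: "f (Inf S) = 0"
    using Inf_S assms(2) unfolding S_def by (auto simp: order.order_iff_strict)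
  have Inf_least: "Inf S \<le> t" if "0 < t" "f t = 0" for t
  proof (cases "t \<le> y")
    case True
    then have "t \<in> S" using that unfolding S_def by simp
    then show ?thesis using \<open>bdd_below S\<close> by (rule cInf_lower)
  next
    case False
    then show ?thesis using Inf_S unfolding S_def by simp
  qed
  have "r = Inf S"
    unfolding r_def by (rule Least_equality) (use Inf_pos Inf_root Inf_least in auto)
  then show "0 < r" "f r = 0" "\<And>t. 0 < t \<Longrightarrow> f t = 0 \<Longrightarrow> r \<le> t"
    using Inf_pos Inf_root Inf_least by simp_all
qed

lemma continuous_on_ell_minus: "continuous_on A (\<lambda>\<tau>. ell_minus p \<eta> \<tau> s)"
  unfolding ell_minus_def by (intro continuous_intros)

lemma pi_div_le_pi_half: "p \<ge> 2 \<Longrightarrow> pi / real p \<le> pi / 2"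
  by (rule divide_left_mono) auto

lemma ell_minus_at_zero:
  assumes "p \<ge> 2"
  shows "ell_minus p \<eta> 0 s < 0"
proof -
  have "0 < pi / real p" "pi / real p < pi"
    using assms pi_div_le_pi_half[OF assms] pi_gt_zero by (simp, linarith)
  then show ?thesis unfolding ell_minus_def by (simp add: sin_gt_zero)
qed

lemma ell_minus_root_below:
  assumes "p \<ge> 2" "0 < t" "ell_minus p \<eta> t s > 0"
  shows "\<exists>y. 0 < y \<and> y < t \<and> ell_minus p \<eta> y s = 0"
proof -
  have neg: "ell_minus p \<eta> 0 s < 0" using assms(1) by (rule ell_minus_at_zero)
  obtain y where y: "0 \<le> y" "y \<le> t" "ell_minus p \<eta> y s = 0"
    using IVT'[of "\<lambda>\<tau>. ell_minus p \<eta> \<tau> s" 0 0 t] neg assms continuous_on_ell_minus by force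
  moreover have "y \<noteq> 0" using y neg by auto
  moreover have "y \<noteq> t" using y assms(3) by auto
  ultimately show ?thesis by (intro exI[of _ y]) auto
qed

lemma ell_minus_phase_zero:
  assumes "\<tau> * \<eta> * s = pi / real p"
  shows "ell_minus p \<eta> \<tau> s = s * sin \<tau>"
  unfolding ell_minus_def assms by simp

lemma ell_minus_strict_mono_in_s:
  assumes "p \<ge> 2" "0 < r" "r \<le> pi / 2" "0 < \<eta>" "0 \<le> s1" "s1 < s2"
    and phase_nonpos: "r * \<eta> * s2 \<le> pi / real p"
  shows "ell_minus p \<eta> r s1 < ell_minus p \<eta> r s2"
proof -
  define \<theta>1 where "\<theta>1 = r * \<eta> * s1 - pi / real p"
  define \<theta>2 where "\<theta>2 = r * \<eta> * s2 - pi / real p"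
  have "0 \<le> r * \<eta> * s1" using assms by simp
  then have lower: "- (pi / 2) \<le> \<theta>1"
    unfolding \<theta>1_def using pi_div_le_pi_half[OF assms(1)] by linarith
  have between: "\<theta>1 < \<theta>2" unfolding \<theta>1_def \<theta>2_def using assms by simp
  have upper: "\<theta>2 \<le> 0" unfolding \<theta>2_def using phase_nonpos by simp
  have sin_le: "sin \<theta>1 \<le> sin \<theta>2"
    by (rule sin_monotone_2pi_le) (use lower between upper pi_gt_zero in linarith)+
  have cos_le: "cos \<theta>1 \<le> cos \<theta>2"
    by (rule cos_monotone_minus_pi_0') (use lower between upper pi_gt_zero in linarith)+
  have cos_pos: "0 < cos \<theta>2"
    by (rule cos_gt_zero_pi) (use lower between upper pi_gt_zero in linarith)+
  have cos_r: "0 \<le> cos r" and sin_r: "0 < sin r"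
    using assms(2,3) by (auto intro!: cos_ge_zero sin_gt_zero)
  have "cos r * sin \<theta>1 \<le> cos r * sin \<theta>2"
    using sin_le cos_r by (rule mult_left_mono)
  moreover have "s1 * sin r * cos \<theta>1 \<le> s1 * sin r * cos \<theta>2"
    using assms(5) sin_r cos_le by (simp add: mult_left_mono)
  moreover have "s1 * sin r * cos \<theta>2 < s2 * sin r * cos \<theta>2"
    using assms(6) sin_r cos_pos by simp
  ultimately show ?thesis unfolding ell_minus_def \<theta>1_def[symmetric] \<theta>2_def[symmetric] by linarith
qed

lemma ell_minus_root_before_root:
  assumes "p \<ge> 2" "0 < \<eta>" "0 \<le> s1" "s1 < s2"
    and "0 < r" "r \<le> pi / 2" "ell_minus p \<eta> r s1 = 0"
  shows "\<exists>y. 0 < y \<and> y < r \<and> ell_minus p \<eta> y s2 = 0"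
proof (cases "pi / real p / (\<eta> * s2) < r")
  case True
  define \<phi> where "\<phi> = pi / real p / (\<eta> * s2)"
  have "0 < s2" using assms by simp
  then have "0 < \<phi>" "\<phi> * \<eta> * s2 = pi / real p"
    unfolding \<phi>_def using assms by (simp_all add: field_simps)
  moreover have "\<phi> < pi" using True assms(6) pi_gt_zero unfolding \<phi>_def by linarith
  ultimately have "ell_minus p \<eta> \<phi> s2 > 0"
    using \<open>0 < s2\<close> by (simp add: ell_minus_phase_zero sin_gt_zero)
  then show ?thesis
    using ell_minus_root_below[OF assms(1) \<open>0 < \<phi>\<close>] True unfolding \<phi>_def by force
next
  case False
  then have "r * \<eta> * s2 \<le> pi / real p" using assms by (simp add: field_simps)
  then have "ell_minus p \<eta> r s2 > 0"
    using ell_minus_strict_mono_in_s[of p r \<eta> s1 s2] assms by simp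
  then show ?thesis using ell_minus_root_below[OF assms(1,5)] by blast
qed

lemma ell_minus_root_exists:
  assumes "p \<ge> 2" "0 < \<eta>" "0 \<le> s"
  shows "\<exists>y. 0 < y \<and> y \<le> pi / 2 \<and> ell_minus p \<eta> y s = 0"
proof (cases "s = 0")
  case True
  then show ?thesis by (intro exI[of _ "pi / 2"]) (simp add: ell_minus_def)
next
  case False
  have "ell_minus p \<eta> (pi / 2) 0 = 0" by (simp add: ell_minus_def)
  then show ?thesis
    using ell_minus_root_before_root[of p \<eta> 0 s "pi / 2"] assms False by force
qed

lemma tau_ell_minus:
  assumes "p \<ge> 2" "0 < \<eta>" "0 \<le> s"
  shows tau_ell_minus_pos: "0 < tau_ell_minus p \<eta> s"
    and tau_ell_minus_le_pi_half: "tau_ell_minus p \<eta> s \<le> pi / 2"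
    and ell_minus_tau_ell_minus: "ell_minus p \<eta> (tau_ell_minus p \<eta> s) s = 0"
    and tau_ell_minus_le_root: "\<And>y. 0 < y \<Longrightarrow> ell_minus p \<eta> y s = 0 \<Longrightarrow> tau_ell_minus p \<eta> s \<le> y"
proof -
  obtain y where y: "0 < y" "y \<le> pi / 2" "ell_minus p \<eta> y s = 0"
    using ell_minus_root_exists[OF assms] by blast
  note least = Least_positive_root[of y "\<lambda>\<tau>. ell_minus p \<eta> \<tau> s",
      OF continuous_on_ell_minus less_imp_neq[OF ell_minus_at_zero[OF assms(1)]] y(1,3),
      folded tau_ell_minus_def]
  show "0 < tau_ell_minus p \<eta> s" "ell_minus p \<eta> (tau_ell_minus p \<eta> s) s = 0"
    "\<And>y. 0 < y \<Longrightarrow> ell_minus p \<eta> y s = 0 \<Longrightarrow> tau_ell_minus p \<eta> s \<le> y"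
    using least by auto
  show "tau_ell_minus p \<eta> s \<le> pi / 2" using least(3)[OF y(1,3)] y(2) by linarith
qed

theorem mainTheorem6:
  fixes p :: nat and \<eta> :: real
  assumes "p \<ge> 2" and "\<eta> > 0"
  shows "\<forall>s1 s2. 0 \<le> s1 \<longrightarrow> s1 < s2 \<longrightarrow> s2 \<le> 1 \<longrightarrow>
           tau_ell_minus p \<eta> s2 < tau_ell_minus p \<eta> s1"
proof (intro allI impI)
  fix s1 s2 :: real
  assume s: "0 \<le> s1" "s1 < s2" "s2 \<le> 1"
  obtain y where y: "0 < y" "y < tau_ell_minus p \<eta> s1" "ell_minus p \<eta> y s2 = 0"
    using ell_minus_root_before_root[OF assms s(1,2) tau_ell_minus_pos tau_ell_minus_le_pi_half
        ell_minus_tau_ell_minus] assms s(1) by blast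
  have "tau_ell_minus p \<eta> s2 \<le> y"
    using tau_ell_minus_le_root[OF assms _ y(1,3)] s by simp
  with y(2) show "tau_ell_minus p \<eta> s2 < tau_ell_minus p \<eta> s1" by simp
qed

end
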